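(* Let $(A,B)$ be a random vector, $(A_n,B_n)_{n\in\mathbb N}$ i.i.d. copies, $X=\sum_{k\ge1}\Pi_{k-1}B_k$ with $|X|<\infty$ a.s., and suppose $\mathbb P\{A=-1\}>0$. Then for $r>0$, $\mathbb E e^{rX}<\infty$ if and only if $\mathbb E e^{r|X|}<\infty$.
   Context: $\Pi_0:=1$, $\Pi_n:=A_1\cdots A_n$. *)

theory Defs
  imports "HOL-Probability.Probability"
begin

definition Pi_prod :: "(nat \<Rightarrow> 'a \<Rightarrow> real) \<Rightarrow> nat \<Rightarrow> 'a \<Rightarrow> real" where
  "Pi_prod As n \<omega> = (\<Prod>j=1..n. As j \<omega>)"

definition perp_partial :: "(nat \<Rightarrow> 'a \<Rightarrow> real) \<Rightarrow> (nat \<Rightarrow> 'a \<Rightarrow> real) \<Rightarrow> nat \<Rightarrow> 'a \<Rightarrow> real" where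
  "perp_partial As Bs n \<omega> = (\<Sum>k=1..n. Pi_prod As (k - 1) \<omega> * Bs k \<omega>)"

end

theory Submission
  imports Defs
begin

text \<open>
  On the event A_1 = -1 the perpetuity satisfies X = B_1 - X', where X' is the perpetuity of the
  shifted sequence (A_(n+1), B_(n+1)); X' is independent of (A_1, B_1) and distributed like X.
  Hence E e^(rX) \<ge> E[1{A_1 = -1} e^(r B_1)] \<cdot> E e^(-rX) with a positive first factor, so a finite
  E e^(rX) forces a finite E e^(-rX), and e^(r|X|) \<le> e^(rX) + e^(-rX).
\<close>

lemma borel_measurable_fst [measurable]:
  "(fst :: 'a::topological_space \<times> 'b::topological_space \<Rightarrow> 'a) \<in> borel_measurable borel"
  by (intro borel_measurable_continuous_onI continuous_on_fst continuous_on_id)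

lemma borel_measurable_snd [measurable]:
  "(snd :: 'a::topological_space \<times> 'b::topological_space \<Rightarrow> 'b) \<in> borel_measurable borel"
  by (intro borel_measurable_continuous_onI continuous_on_snd continuous_on_id)

text \<open>A sequence \<open>s\<close> stands for ((A_1, B_1), (A_2, B_2), ...), indexed from 0.
  \<open>perpetuity s\<close> is a junk value unless the partial sums converge.\<close>

definition perpetuity_partial :: "(nat \<Rightarrow> real \<times> real) \<Rightarrow> nat \<Rightarrow> real" where
  "perpetuity_partial s n = (\<Sum>k<n. (\<Prod>j<k. fst (s j)) * snd (s k))"

definition perpetuity :: "(nat \<Rightarrow> real \<times> real) \<Rightarrow> real" where
  "perpetuity s = lim (perpetuity_partial s)"

lemma perpetuity_partial_Suc:
  "perpetuity_partial s (Suc n) = snd (s 0) + fst (s 0) * perpetuity_partial (\<lambda>i. s (Suc i)) n"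
  unfolding perpetuity_partial_def
  by (simp add: sum.lessThan_Suc_shift prod.lessThan_Suc_shift sum_distrib_left mult.assoc
           del: sum.lessThan_Suc prod.lessThan_Suc)

lemma perp_partial_eq_perpetuity_partial:
  "perp_partial As Bs n \<omega> = perpetuity_partial (\<lambda>i. (As (Suc i) \<omega>, Bs (Suc i) \<omega>)) n"
proof (induction n)
  case 0
  then show ?case by (simp add: perp_partial_def perpetuity_partial_def)
next
  case (Suc n)
  have "Pi_prod As n \<omega> = (\<Prod>j<n. As (Suc j) \<omega>)"
    unfolding Pi_prod_def by (induction n) (simp_all add: prod.nat_ivl_Suc')
  with Suc show ?case by (simp add: perp_partial_def perpetuity_partial_def)
qed

lemma perpetuity_unfold:
  assumes "fst (s 0) \<noteq> 0" and "perpetuity_partial s \<longlonglongrightarrow> x"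
  shows "x = snd (s 0) + fst (s 0) * perpetuity (\<lambda>i. s (Suc i))"
proof -
  have "(\<lambda>n. (perpetuity_partial s (Suc n) - snd (s 0)) / fst (s 0))
          \<longlonglongrightarrow> (x - snd (s 0)) / fst (s 0)"
    using LIMSEQ_Suc[OF assms(2)] assms(1) by (auto intro!: tendsto_intros)
  moreover have "(\<lambda>n. (perpetuity_partial s (Suc n) - snd (s 0)) / fst (s 0))
                   = perpetuity_partial (\<lambda>i. s (Suc i))"
    using assms(1) by (simp add: perpetuity_partial_Suc fun_eq_iff)
  ultimately have "perpetuity (\<lambda>i. s (Suc i)) = (x - snd (s 0)) / fst (s 0)"
    unfolding perpetuity_def by (simp add: limI)
  with assms(1) show ?thesis by simp
qed

lemma borel_measurable_perpetuity [measurable]: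
  "perpetuity \<in> borel_measurable (PiM UNIV (\<lambda>_. borel))"
  unfolding perpetuity_def perpetuity_partial_def by measurable

lemma exp_abs_le_exp_plus_exp_uminus: "exp (r * \<bar>x :: real\<bar>) \<le> exp (r * x) + exp (- r * x)"
  by (cases "x \<ge> 0") (simp_all add: abs_of_nonneg abs_of_neg add_increasing add_increasing2)

lemma nn_integral_exp_abs_less_top_iff:
  fixes X :: "'a \<Rightarrow> real"
  assumes [measurable]: "X \<in> borel_measurable M" and "0 \<le> r"
  shows "(\<integral>\<^sup>+\<omega>. exp (r * \<bar>X \<omega>\<bar>) \<partial>M) < \<infinity> \<longleftrightarrow>
         (\<integral>\<^sup>+\<omega>. exp (r * X \<omega>) \<partial>M) < \<infinity> \<and> (\<integral>\<^sup>+\<omega>. exp (- r * X \<omega>) \<partial>M) < \<infinity>"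
proof
  assume fin: "(\<integral>\<^sup>+\<omega>. exp (r * \<bar>X \<omega>\<bar>) \<partial>M) < \<infinity>"
  have "(\<integral>\<^sup>+\<omega>. exp (s * X \<omega>) \<partial>M) \<le> (\<integral>\<^sup>+\<omega>. exp (r * \<bar>X \<omega>\<bar>) \<partial>M)" if "\<bar>s\<bar> = r" for s
    using that by (intro nn_integral_mono) (auto simp flip: abs_mult)
  from this[of r] this[of "-r"] fin assms(2)
  show "(\<integral>\<^sup>+\<omega>. exp (r * X \<omega>) \<partial>M) < \<infinity> \<and> (\<integral>\<^sup>+\<omega>. exp (- r * X \<omega>) \<partial>M) < \<infinity>"
    by (auto dest: le_less_trans)
next
  assume fin: "(\<integral>\<^sup>+\<omega>. exp (r * X \<omega>) \<partial>M) < \<infinity> \<and> (\<integral>\<^sup>+\<omega>. exp (- r * X \<omega>) \<partial>M) < \<infinity>"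
  have "(\<integral>\<^sup>+\<omega>. exp (r * \<bar>X \<omega>\<bar>) \<partial>M)
          \<le> (\<integral>\<^sup>+\<omega>. ennreal (exp (r * X \<omega>)) + ennreal (exp (- r * X \<omega>)) \<partial>M)"
  proof (rule nn_integral_mono)
    fix \<omega>
    show "ennreal (exp (r * \<bar>X \<omega>\<bar>)) \<le> ennreal (exp (r * X \<omega>)) + ennreal (exp (- r * X \<omega>))"
      using exp_abs_le_exp_plus_exp_uminus[of r "X \<omega>"] by (simp flip: ennreal_plus)
  qed
  also have "\<dots> = (\<integral>\<^sup>+\<omega>. exp (r * X \<omega>) \<partial>M) + (\<integral>\<^sup>+\<omega>. exp (- r * X \<omega>) \<partial>M)"
    by (rule nn_integral_add) measurable
  also have "\<dots> < \<infinity>"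
    using fin by (simp add: ennreal_add_less_top)
  finally show "(\<integral>\<^sup>+\<omega>. exp (r * \<bar>X \<omega>\<bar>) \<partial>M) < \<infinity>" .
qed

lemma emeasure_vimage_eq_of_distr_eq:
  assumes "f \<in> measurable M N" "g \<in> measurable M N" "distr M N f = distr M N g" "S \<in> sets N"
  shows "emeasure M (f -` S \<inter> space M) = emeasure M (g -` S \<inter> space M)"
  using assms by (metis emeasure_distr)

lemma (in prob_space) indep_var_nn_integral_mult:
  assumes "indep_var borel X borel Y" "\<And>\<omega>. 0 \<le> X \<omega>" "\<And>\<omega>. 0 \<le> Y \<omega>"
  shows "(\<integral>\<^sup>+\<omega>. ennreal (X \<omega> * Y \<omega>) \<partial>M) = (\<integral>\<^sup>+\<omega>. X \<omega> \<partial>M) * (\<integral>\<^sup>+\<omega>. Y \<omega> \<partial>M)"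
proof -
  have borel_bool: "case_bool borel borel = (\<lambda>_::bool. borel :: ennreal measure)"
    by (rule ext) (simp split: bool.split)
  have "indep_var borel (ennreal \<circ> X) borel (ennreal \<circ> Y)"
    by (rule indep_var_compose[OF assms(1)]) auto
  then have "indep_vars (\<lambda>_. borel) (case_bool (ennreal \<circ> X) (ennreal \<circ> Y)) UNIV"
    unfolding indep_var_def borel_bool .
  from indep_vars_nn_integral[OF _ this]
  have "(\<integral>\<^sup>+\<omega>. (\<Prod>i\<in>UNIV. case_bool (ennreal \<circ> X) (ennreal \<circ> Y) i \<omega>) \<partial>M)
          = (\<Prod>i\<in>UNIV. \<integral>\<^sup>+\<omega>. case_bool (ennreal \<circ> X) (ennreal \<circ> Y) i \<omega> \<partial>M)"
    by (auto split: bool.split)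
  then show ?thesis
    using assms(2,3) by (simp add: UNIV_bool mult.commute ennreal_mult comp_def)
qed

locale iid_sequence = prob_space +
  fixes N :: "'b measure" and Z :: "nat \<Rightarrow> 'a \<Rightarrow> 'b" and D :: "'b measure"
  assumes indep: "indep_vars (\<lambda>_. N) Z {1..}"
    and identically_distributed: "\<And>n. 1 \<le> n \<Longrightarrow> distr M N (Z n) = D"
begin

text \<open>\<open>tail m\<close> is the sequence Z (m + 1), Z (m + 2), ...; thus \<open>tail 0\<close> is the whole sequence.\<close>

definition tail :: "nat \<Rightarrow> 'a \<Rightarrow> nat \<Rightarrow> 'b" where
  "tail m = (\<lambda>\<omega> i. Z (i + Suc m) \<omega>)"

lemma measurable_Z: "1 \<le> n \<Longrightarrow> Z n \<in> measurable M N"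
  using indep by (auto simp: indep_vars_def)

lemma measurable_tail: "tail m \<in> measurable M (PiM UNIV (\<lambda>_. N))"
proof -
  have "(\<lambda>\<omega>. \<lambda>i\<in>UNIV. Z (i + Suc m) \<omega>) \<in> measurable M (PiM UNIV (\<lambda>_. N))"
    by (rule measurable_restrict) (simp add: measurable_Z)
  then show ?thesis
    by (simp add: tail_def restrict_UNIV)
qed

lemma distr_tail: "distr M (PiM UNIV (\<lambda>_. N)) (tail m) = PiM UNIV (\<lambda>_. D)"
proof -
  have "indep_vars (\<lambda>j. PiM {j + Suc m} (\<lambda>_. N)) (\<lambda>j \<omega>. restrict (\<lambda>i. Z i \<omega>) {j + Suc m}) UNIV"
    by (rule indep_vars_restrict[OF indep]) (auto simp: disjoint_family_on_def)
  then have "indep_vars (\<lambda>_. N) (\<lambda>j \<omega>. (\<lambda>f. f (j + Suc m)) (restrict (\<lambda>i. Z i \<omega>) {j + Suc m})) UNIV"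
    by (rule indep_vars_compose2) (rule measurable_component_singleton, simp)
  then show ?thesis
    using indep_vars_iff_distr_eq_PiM'[of UNIV "\<lambda>j. Z (j + Suc m)" "\<lambda>_. N"]
    by (simp add: tail_def restrict_UNIV measurable_Z identically_distributed)
qed

lemma nn_integral_tail:
  assumes "f \<in> borel_measurable (PiM UNIV (\<lambda>_. N))"
  shows "(\<integral>\<^sup>+\<omega>. f (tail m \<omega>) \<partial>M) = (\<integral>\<^sup>+\<omega>. f (tail 0 \<omega>) \<partial>M)"
proof -
  have "(\<integral>\<^sup>+\<omega>. f (tail k \<omega>) \<partial>M) = (\<integral>\<^sup>+s. f s \<partial>distr M (PiM UNIV (\<lambda>_. N)) (tail k))" for k
    by (simp add: nn_integral_distr[OF measurable_tail] assms)
  then show ?thesis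
    by (simp only: distr_tail)
qed

lemma indep_head_tail:
  assumes "g \<in> borel_measurable N" and "h \<in> borel_measurable (PiM UNIV (\<lambda>_. N))"
  shows "indep_var borel (\<lambda>\<omega>. g (Z 1 \<omega>)) borel (\<lambda>\<omega>. h (tail 1 \<omega>))"
proof -
  have head: "(\<lambda>f. g (f 1)) \<in> borel_measurable (PiM {1} (\<lambda>_. N))"
    by (rule measurable_compose[OF measurable_component_singleton[of 1] assms(1)]) simp
  have "(\<lambda>f. \<lambda>i\<in>UNIV. f (i + 2)) \<in> measurable (PiM {2::nat..} (\<lambda>_. N)) (PiM UNIV (\<lambda>_. N))"
    by (rule measurable_restrict) (rule measurable_component_singleton, simp)
  then have tail: "(\<lambda>f. h (\<lambda>i. f (i + 2))) \<in> borel_measurable (PiM {2::nat..} (\<lambda>_. N))"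
    using measurable_compose[OF _ assms(2)] by (simp add: restrict_UNIV)
  show ?thesis
    using indep_var_compose[OF indep_var_restrict[OF indep, of "{1}" "{2..}"] head tail]
    by (simp add: comp_def tail_def numeral_2_eq_2)
qed

end

locale iid_perpetuity = iid_sequence M borel Z D
  for M :: "'a measure" and Z :: "nat \<Rightarrow> 'a \<Rightarrow> real \<times> real" and D +
  fixes X :: "'a \<Rightarrow> real"
  assumes measurable_X [measurable]: "X \<in> borel_measurable M"
    and perpetuity_converges: "AE \<omega> in M. perpetuity_partial (tail 0 \<omega>) \<longlonglongrightarrow> X \<omega>"
begin

lemma AE_X_eq_perpetuity: "AE \<omega> in M. X \<omega> = perpetuity (tail 0 \<omega>)"
  using perpetuity_converges by eventually_elim (simp add: perpetuity_def limI)

lemma AE_X_reflect: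
  "AE \<omega> in M. fst (Z 1 \<omega>) = -1 \<longrightarrow> X \<omega> = snd (Z 1 \<omega>) - perpetuity (tail 1 \<omega>)"
  using perpetuity_converges
proof eventually_elim
  case (elim \<omega>)
  have "(\<lambda>i. tail 0 \<omega> (Suc i)) = tail 1 \<omega>"
    by (simp add: tail_def)
  with perpetuity_unfold[OF _ elim] show ?case
    by (simp add: tail_def)
qed

lemma reflected_moment_le:
  "(\<integral>\<^sup>+\<omega>. of_bool (fst (Z 1 \<omega>) = -1) * exp (r * snd (Z 1 \<omega>)) \<partial>M) * (\<integral>\<^sup>+\<omega>. exp (- r * X \<omega>) \<partial>M)
     \<le> (\<integral>\<^sup>+\<omega>. exp (r * X \<omega>) \<partial>M)"
proof -
  let ?g = "\<lambda>z. of_bool (fst z = -1) * exp (r * snd z)"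
  let ?h = "\<lambda>s. exp (- r * perpetuity s)"
  have indep: "indep_var borel (\<lambda>\<omega>. ?g (Z 1 \<omega>)) borel (\<lambda>\<omega>. ?h (tail 1 \<omega>))"
    by (rule indep_head_tail[of ?g ?h]) measurable
  have "(\<integral>\<^sup>+\<omega>. exp (- r * X \<omega>) \<partial>M) = (\<integral>\<^sup>+\<omega>. ?h (tail 0 \<omega>) \<partial>M)"
    using AE_X_eq_perpetuity by (intro nn_integral_cong_AE) auto
  also have "\<dots> = (\<integral>\<^sup>+\<omega>. ?h (tail 1 \<omega>) \<partial>M)"
    by (rule nn_integral_tail[symmetric]) measurable
  finally have "(\<integral>\<^sup>+\<omega>. ?g (Z 1 \<omega>) \<partial>M) * (\<integral>\<^sup>+\<omega>. exp (- r * X \<omega>) \<partial>M)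
                  = (\<integral>\<^sup>+\<omega>. ennreal (?g (Z 1 \<omega>) * ?h (tail 1 \<omega>)) \<partial>M)"
    using indep_var_nn_integral_mult[OF indep] by simp
  also have "\<dots> \<le> (\<integral>\<^sup>+\<omega>. exp (r * X \<omega>) \<partial>M)"
    using AE_X_reflect
    by (intro nn_integral_mono_AE, eventually_elim) (auto simp: right_diff_distrib simp flip: exp_add)
  finally show ?thesis .
qed

lemma nn_integral_exp_uminus_less_top:
  assumes "0 < prob {\<omega> \<in> space M. fst (Z 1 \<omega>) = -1}"
    and "(\<integral>\<^sup>+\<omega>. exp (r * X \<omega>) \<partial>M) < \<infinity>"
  shows "(\<integral>\<^sup>+\<omega>. exp (- r * X \<omega>) \<partial>M) < \<infinity>"
proof -
  have [measurable]: "Z 1 \<in> borel_measurable M"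
    by (rule measurable_Z) simp
  have "{\<omega> \<in> space M. fst (Z 1 \<omega>) = -1} \<in> events"
    by measurable
  then have "\<not> (AE \<omega> in M. fst (Z 1 \<omega>) \<noteq> -1)"
    using assms(1) by (subst AE_iff_measurable[OF _ refl]) (auto simp: measure_def)
  moreover have "(\<lambda>\<omega>. ennreal (of_bool (fst (Z 1 \<omega>) = -1) * exp (r * snd (Z 1 \<omega>)))) \<in> borel_measurable M"
    by measurable
  ultimately have "(\<integral>\<^sup>+\<omega>. of_bool (fst (Z 1 \<omega>) = -1) * exp (r * snd (Z 1 \<omega>)) \<partial>M) \<noteq> 0"
    by (simp add: nn_integral_0_iff_AE)
  moreover have "(\<integral>\<^sup>+\<omega>. of_bool (fst (Z 1 \<omega>) = -1) * exp (r * snd (Z 1 \<omega>)) \<partial>M)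
                    * (\<integral>\<^sup>+\<omega>. exp (- r * X \<omega>) \<partial>M) < \<infinity>"
    using reflected_moment_le[of r] assms(2) by (rule le_less_trans)
  ultimately show ?thesis
    by (auto simp: ennreal_mult_less_top)
qed

end

theorem mainTheorem6:
  fixes M :: "'a measure"
    and A B :: "'a \<Rightarrow> real"
    and As Bs :: "nat \<Rightarrow> 'a \<Rightarrow> real"
    and X :: "'a \<Rightarrow> real"
    and r :: real
  assumes "prob_space M"
    and "A \<in> borel_measurable M" and "B \<in> borel_measurable M"
    and "\<And>n. n \<ge> 1 \<Longrightarrow> As n \<in> borel_measurable M"
    and "\<And>n. n \<ge> 1 \<Longrightarrow> Bs n \<in> borel_measurable M"
    and "prob_space.indep_vars M (\<lambda>_. borel) (\<lambda>n \<omega>. (As n \<omega>, Bs n \<omega>)) {1..}"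
    and "\<And>n. n \<ge> 1 \<Longrightarrow>
           distr M borel (\<lambda>\<omega>. (As n \<omega>, Bs n \<omega>)) = distr M borel (\<lambda>\<omega>. (A \<omega>, B \<omega>))"
    and "X \<in> borel_measurable M"
    and "AE \<omega> in M. (\<lambda>n. perp_partial As Bs n \<omega>) \<longlonglongrightarrow> X \<omega>"
    and "measure M {\<omega> \<in> space M. A \<omega> = -1} > 0"
    and "r > 0"
  shows "(\<integral>\<^sup>+ \<omega>. ennreal (exp (r * X \<omega>)) \<partial>M) < \<infinity> \<longleftrightarrow>
         (\<integral>\<^sup>+ \<omega>. ennreal (exp (r * \<bar>X \<omega>\<bar>)) \<partial>M) < \<infinity>"
proof -
  let ?Z = "\<lambda>n \<omega>. (As n \<omega>, Bs n \<omega>)"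
  interpret prob_space M
    by fact
  interpret iid_sequence M borel ?Z "distr M borel (\<lambda>\<omega>. (A \<omega>, B \<omega>))"
    using assms(6,7) by unfold_locales auto
  interpret iid_perpetuity M ?Z "distr M borel (\<lambda>\<omega>. (A \<omega>, B \<omega>))" X
    using assms(8,9) by unfold_locales (simp_all add: tail_def perp_partial_eq_perpetuity_partial)
  have "emeasure M (?Z 1 -` ({-1} \<times> UNIV) \<inter> space M)
          = emeasure M ((\<lambda>\<omega>. (A \<omega>, B \<omega>)) -` ({-1} \<times> UNIV) \<inter> space M)"
    using assms(2-5,7) borel_closed[OF closed_Times[OF closed_singleton closed_UNIV]]
    by (intro emeasure_vimage_eq_of_distr_eq) auto
  then have "prob {\<omega> \<in> space M. fst (?Z 1 \<omega>) = -1} = prob {\<omega> \<in> space M. A \<omega> = -1}"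
    by (simp add: measure_def vimage_def Int_def conj_commute)
  then show ?thesis
    using nn_integral_exp_uminus_less_top[of r] nn_integral_exp_abs_less_top_iff[OF measurable_X, of r]
      assms(10,11)
    by auto
qed

end
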